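(* Let $G$ be a group with finite generating set $A$, and let $\varphi:L_\Sigma\to G$ be a bijection from a regular language $L_\Sigma\subseteq\Sigma^*$ over some finite alphabet $\Sigma$ such that for each $a\in A$ the relation $\{(\varphi^{-1}(g),\varphi^{-1}(ga)) : g\in G\}$ is FA-recognizable. Let $h_\varphi(n)=\max\{d_A(\varphi(w)) : w\in L_\Sigma, |w|\le n\}$. If $h_\varphi\preceq f$ for some $f\in\mathfrak{F}$, then $G\in\mathcal{B}_{\tilde f}$, where $\tilde f=f+\mathfrak{i}$.
   Context: $\mathfrak{i}(n)=n$; $d_A$ is the word metric on $G$ and $d_A(g)=d_A(e,g)$. A relation $R\subseteq(\Sigma^* )^2$ is FA-recognizable if the language of convolutions $u\otimes v$ (parallel readings of $u,v$ with the shorter padded by a new symbol $\diamond$) is regular. $\mathfrak{F}$ is the set of nondecreasing functions from some interval $[Q,\infty)\cap\mathbb{N}$ to the nonnegative reals; $g\preceq f$ means there exist $N\ge0$ and positive integers $K,M$ with $g(n)\le Kf(Mn)$ for all $n\ge N$. With $S=A\cup A^{-1}$ and $\pi:S^*\to G$ the evaluation map, a Cayley automatic representation is such a bijection $\psi:L\to G$ with $L\subseteq S^*$ (i.e., over the alphabet $S$); its function is $h(n)=\max\{d_A(\pi(w),\psi(w)): w\in L,|w|\le n\}$, and $G\in\mathcal{B}_f$ means some Cayley automatic representation over $S$ (for some finite generating set; this is independent of the choice) has $h\preceq f$. *)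

theory Defs
  imports Complex_Main "HOL-Algebra.Generated_Groups"
begin

text \<open>A language L over a finite alphabet Sig is regular if it is accepted by a
deterministic finite automaton with input alphabet Sig.  States are taken from nat
(any finite state set can be renumbered).\<close>

definition regular_lang :: "'a set \<Rightarrow> 'a list set \<Rightarrow> bool" where
  "regular_lang Sig L \<longleftrightarrow>
     L \<subseteq> lists Sig \<and>
     (\<exists>(Q::nat set) q0 (delta :: nat \<Rightarrow> 'a \<Rightarrow> nat) F.
        finite Q \<and> q0 \<in> Q \<and> (\<forall>q\<in>Q. \<forall>x\<in>Sig. delta q x \<in> Q) \<and> F \<subseteq> Q \<and>
        L = {w \<in> lists Sig. foldl delta q0 w \<in> F})"

text \<open>Convolution u \<otimes> v: parallel reading, the shorter word padded with the
new symbol diamond, which is represented by None.\<close>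

definition conv :: "'a list \<Rightarrow> 'b list \<Rightarrow> ('a option \<times> 'b option) list" where
  "conv u v = map (\<lambda>i. (if i < length u then Some (u ! i) else None,
                       if i < length v then Some (v ! i) else None))
                 [0..<max (length u) (length v)]"

definition conv_alph :: "'a set \<Rightarrow> 'b set \<Rightarrow> ('a option \<times> 'b option) set" where
  "conv_alph S T = ((insert None (Some ` S)) \<times> (insert None (Some ` T))) - {(None, None)}"

definition FA_recognizable :: "'a set \<Rightarrow> ('a list \<times> 'a list) set \<Rightarrow> bool" where
  "FA_recognizable Sig R \<longleftrightarrow>
     R \<subseteq> lists Sig \<times> lists Sig \<and>
     regular_lang (conv_alph Sig Sig) ((\<lambda>(u, v). conv u v) ` R)"

definition gen_alph :: "('g, 'b) monoid_scheme \<Rightarrow> 'g set \<Rightarrow> 'g set" where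
  "gen_alph G A = A \<union> m_inv G ` A"

definition word_eval :: "('g, 'b) monoid_scheme \<Rightarrow> 'g list \<Rightarrow> 'g" where
  "word_eval G w = foldr (\<lambda>x y. x \<otimes>\<^bsub>G\<^esub> y) w \<one>\<^bsub>G\<^esub>"

definition word_length :: "('g, 'b) monoid_scheme \<Rightarrow> 'g set \<Rightarrow> 'g \<Rightarrow> nat" where
  "word_length G A g = (LEAST n. \<exists>w \<in> lists (gen_alph G A). length w = n \<and> word_eval G w = g)"

definition word_dist :: "('g, 'b) monoid_scheme \<Rightarrow> 'g set \<Rightarrow> 'g \<Rightarrow> 'g \<Rightarrow> nat" where
  "word_dist G A g h = word_length G A (inv\<^bsub>G\<^esub> g \<otimes>\<^bsub>G\<^esub> h)"

definition fin_gen_set :: "('g, 'b) monoid_scheme \<Rightarrow> 'g set \<Rightarrow> bool" where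
  "fin_gen_set G A \<longleftrightarrow> finite A \<and> A \<subseteq> carrier G \<and> generate G A = carrier G"

definition automatic_rep ::
  "('g, 'b) monoid_scheme \<Rightarrow> 'g set \<Rightarrow> 'a set \<Rightarrow> 'a list set \<Rightarrow> ('a list \<Rightarrow> 'g) \<Rightarrow> bool" where
  "automatic_rep G A Sig L psi \<longleftrightarrow>
     finite Sig \<and> regular_lang Sig L \<and> bij_betw psi L (carrier G) \<and>
     (\<forall>a\<in>A. FA_recognizable Sig
        {(the_inv_into L psi g, the_inv_into L psi (g \<otimes>\<^bsub>G\<^esub> a)) | g. g \<in> carrier G})"

text \<open>max over a finite set of naturals, as a real; the value 0 is inserted so that the
maximum of the (possibly empty, for small n) set is well defined; since distances are
nonnegative this changes nothing whenever the set is nonempty.\<close>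

definition h_phi :: "('g, 'b) monoid_scheme \<Rightarrow> 'g set \<Rightarrow> 'a list set \<Rightarrow> ('a list \<Rightarrow> 'g) \<Rightarrow> nat \<Rightarrow> real" where
  "h_phi G A L phi n = real (Max (insert 0 {word_length G A (phi w) | w. w \<in> L \<and> length w \<le> n}))"

definition h_cayley :: "('g, 'b) monoid_scheme \<Rightarrow> 'g set \<Rightarrow> 'g list set \<Rightarrow> ('g list \<Rightarrow> 'g) \<Rightarrow> nat \<Rightarrow> real" where
  "h_cayley G A L psi n =
     real (Max (insert 0 {word_dist G A (word_eval G w) (psi w) | w. w \<in> L \<and> length w \<le> n}))"

text \<open>f is in F with domain [Q, \<infinity>): nondecreasing and nonnegative there
(values below Q are irrelevant).\<close>
definition in_frakF :: "(nat \<Rightarrow> real) \<Rightarrow> nat \<Rightarrow> bool" where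
  "in_frakF f Q \<longleftrightarrow> (\<forall>n\<ge>Q. 0 \<le> f n) \<and> (\<forall>m n. Q \<le> m \<longrightarrow> m \<le> n \<longrightarrow> f m \<le> f n)"

definition preceq :: "(nat \<Rightarrow> real) \<Rightarrow> (nat \<Rightarrow> real) \<Rightarrow> bool" (infix "\<preceq>\<^sub>F" 50) where
  "g \<preceq>\<^sub>F f \<longleftrightarrow> (\<exists>N::nat. \<exists>K M :: nat. K > 0 \<and> M > 0 \<and>
                    (\<forall>n\<ge>N. g n \<le> real K * f (M * n)))"

definition in_B :: "('g, 'b) monoid_scheme \<Rightarrow> (nat \<Rightarrow> real) \<Rightarrow> bool" where
  "in_B G f \<longleftrightarrow> (\<exists>A L psi. fin_gen_set G A \<and> L \<subseteq> lists (gen_alph G A) \<and>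
                     automatic_rep G A (gen_alph G A) L psi \<and> h_cayley G A L psi \<preceq>\<^sub>F f)"

end

theory Submission
  imports Defs
begin

text \<open>Recode the alphabet Sig by blocks of a fixed length k over S = A \<union> A\<inverse> \<union> {1}.
  If G is nontrivial then S has at least two letters (the identity is added to A because
  A = {a} with a * a = 1 would give a one-letter S), so for k = |Sig| + 1 there is an injective
  block code e : Sig \<rightarrow> S^k.  Uniform block codes preserve regularity; as the convolution of
  two coded words is the coded convolution (a padding symbol being coded as k padding
  symbols), they also preserve FA-recognizability, and the new generator 1 only contributes
  the diagonal relation.  For a coded word w = e(u) we have |u| \<le> |w|, and walking back along
  w and then along a geodesic to phi(u) gives d(\<pi>(w), phi(u)) \<le> |w| + d_A(phi(u)), whence
  h(n) \<le> n + h_phi(n).  The trivial group is represented by the language {[]}.\<close>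

section \<open>Regular languages and block codes\<close>

lemma regular_langI:
  fixes Q :: "'q set" and delta :: "'q \<Rightarrow> 'a \<Rightarrow> 'q"
  assumes "finite Q" "start \<in> Q" "\<forall>q\<in>Q. \<forall>x\<in>Sig. delta q x \<in> Q" "F \<subseteq> Q"
    and "L = {w \<in> lists Sig. foldl delta start w \<in> F}"
  shows "regular_lang Sig L"
proof -
  obtain f :: "'q \<Rightarrow> nat" where inj: "inj_on f Q"
    using finite_imp_inj_to_nat_seg[OF assms(1)] by blast
  define delta' where "delta' = (\<lambda>m x. f (delta (inv_into Q f m) x))"
  have fold: "foldl delta' (f q) w = f (foldl delta q w) \<and> foldl delta q w \<in> Q"
    if "q \<in> Q" "w \<in> lists Sig" for q w
    using that
  proof (induction w arbitrary: q)
    case (Cons x w)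
    then show ?case using inj assms(3) by (simp add: delta'_def)
  qed simp
  have "foldl delta' (f start) w \<in> f ` F \<longleftrightarrow> foldl delta start w \<in> F" if "w \<in> lists Sig" for w
    using fold[OF assms(2) that] inj assms(4) by (metis inj_on_image_mem_iff)
  then have "L = {w \<in> lists Sig. foldl delta' (f start) w \<in> f ` F}"
    using assms(5) by auto
  moreover have "\<forall>q\<in>f ` Q. \<forall>x\<in>Sig. delta' q x \<in> f ` Q"
    using assms(3) inj by (auto simp: delta'_def)
  moreover have "L \<subseteq> lists Sig" "finite (f ` Q)" "f start \<in> f ` Q" "f ` F \<subseteq> f ` Q"
    using assms by auto
  ultimately show ?thesis
    unfolding regular_lang_def by blast
qed

lemma regular_lang_Nil: "regular_lang Sig {[]}"
proof (rule regular_langI[where Q="{0, Suc 0}" and start=0 and delta="\<lambda>_ _. Suc 0" and F="{0}"])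
  have [simp]: "foldl (\<lambda>_ _. Suc 0) q w = (if w = [] then q else Suc 0)" for q w
    by (induction w arbitrary: q) auto
  show "{[]} = {w \<in> lists Sig. foldl (\<lambda>_ _. Suc 0) 0 w \<in> {0}}" by auto
qed auto

definition block_code :: "('a \<Rightarrow> 'b list) \<Rightarrow> nat \<Rightarrow> 'a set \<Rightarrow> 'b set \<Rightarrow> bool" where
  "block_code e k Sig T \<longleftrightarrow> 0 < k \<and> inj_on e Sig \<and> (\<forall>x\<in>Sig. e x \<in> lists T \<and> length (e x) = k)"

abbreviation block_encode :: "('a \<Rightarrow> 'b list) \<Rightarrow> 'a list \<Rightarrow> 'b list" where
  "block_encode e u \<equiv> concat (map e u)"

lemma length_block_encode:
  "\<forall>x\<in>set u. length (e x) = k \<Longrightarrow> length (block_encode e u) = k * length u"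
  by (induction u) auto

lemma block_encode_in_lists:
  "block_code e k Sig T \<Longrightarrow> u \<in> lists Sig \<Longrightarrow> block_encode e u \<in> lists T"
  by (induction u) (auto simp: block_code_def)

lemma inj_on_block_encode:
  assumes "block_code e k Sig T"
  shows "inj_on (block_encode e) (lists Sig)"
proof (rule inj_onI)
  fix u v assume u: "u \<in> lists Sig" and v: "v \<in> lists Sig"
    and eq: "block_encode e u = block_encode e v"
  have len: "\<forall>x\<in>Sig. length (e x) = k" "0 < k" using assms by (auto simp: block_code_def)
  then have "length u = length v"
    using length_block_encode[of u e k] length_block_encode[of v e k] u v eq by auto
  then show "u = v" using u v eq
  proof (induction u v rule: list_induct2)
    case (Cons a u b v)
    then have "e a = e b" "block_encode e u = block_encode e v" using len by auto
    then show ?case using Cons assms by (auto simp: block_code_def inj_on_def)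
  qed simp
qed

text \<open>A DFA for the image of a language under a block code: it buffers the current
  incomplete block and runs the original DFA on each completed block, and it rejects
  (state None) as soon as a completed block is not a code word.\<close>

definition block_step ::
  "('a \<Rightarrow> 'b list) \<Rightarrow> nat \<Rightarrow> 'a set \<Rightarrow> ('q \<Rightarrow> 'a \<Rightarrow> 'q)
     \<Rightarrow> ('q \<times> 'b list) option \<Rightarrow> 'b \<Rightarrow> ('q \<times> 'b list) option" where
  "block_step e k Sig delta st s = (case st of
      None \<Rightarrow> None
    | Some (q, r) \<Rightarrow>
        if length (r @ [s]) < k then Some (q, r @ [s])
        else if r @ [s] \<in> e ` Sig then Some (delta q (inv_into Sig e (r @ [s])), [])
        else None)"

lemma block_step_simps [simp]:
  "block_step e k Sig delta None s = None"
  "block_step e k Sig delta (Some (q, r)) s =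
     (if length (r @ [s]) < k then Some (q, r @ [s])
      else if r @ [s] \<in> e ` Sig then Some (delta q (inv_into Sig e (r @ [s])), [])
      else None)"
  by (simp_all add: block_step_def)

lemma foldl_block_step_buffer:
  "length (r @ p) < k \<Longrightarrow> foldl (block_step e k Sig delta) (Some (q, r)) p = Some (q, r @ p)"
  by (induction p arbitrary: r) auto

lemma foldl_block_step_block_encode:
  assumes "block_code e k Sig T" "u \<in> lists Sig"
  shows "foldl (block_step e k Sig delta) (Some (q, [])) (block_encode e u)
           = Some (foldl delta q u, [])"
  using assms(2)
proof (induction u arbitrary: q)
  case (Cons x u)
  have x: "x \<in> Sig" "length (e x) = k" "0 < k" "inj_on e Sig"
    using Cons assms(1) by (auto simp: block_code_def)
  then obtain p c where p: "e x = p @ [c]"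
    by (metis length_greater_0_conv rev_exhaust)
  have "foldl (block_step e k Sig delta) (Some (q, [])) (e x)
          = block_step e k Sig delta (Some (q, p)) c"
    using x p by (simp add: foldl_block_step_buffer[of "[]" p k])
  also have "\<dots> = Some (delta q x, [])"
    using x p[symmetric] by (simp add: inv_into_f_f)
  finally show ?case using Cons by simp
qed simp

lemma foldl_block_step_cases:
  assumes "block_code e k Sig T"
  shows "foldl (block_step e k Sig delta) (Some (q, [])) w = None \<or>
    (\<exists>u r. u \<in> lists Sig \<and> w = block_encode e u @ r \<and> length r < k \<and>
       foldl (block_step e k Sig delta) (Some (q, [])) w = Some (foldl delta q u, r))"
proof (induction w rule: rev_induct)
  case Nil
  then show ?case using assms by (auto simp: block_code_def intro!: exI[of _ "[]"])
next
  case (snoc s w)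
  let ?run = "foldl (block_step e k Sig delta) (Some (q, []))"
  show ?case
  proof (cases "?run w = None")
    case True
    then show ?thesis by simp
  next
    case False
    then obtain u r where u: "u \<in> lists Sig" "w = block_encode e u @ r" "length r < k"
      "?run w = Some (foldl delta q u, r)" using snoc.IH by metis
    consider "length (r @ [s]) < k" | "\<not> length (r @ [s]) < k" "r @ [s] \<in> e ` Sig"
      | "\<not> length (r @ [s]) < k" "r @ [s] \<notin> e ` Sig" by blast
    then show ?thesis
    proof cases
      case 1
      then show ?thesis using u by (intro disjI2 exI[of _ u]) simp
    next
      case 2
      define x where "x = inv_into Sig e (r @ [s])"
      have "x \<in> Sig" "e x = r @ [s]" using 2 by (auto simp: x_def inv_into_into f_inv_into_f)
      then show ?thesis using u 2 assms
        by (intro disjI2 exI[of _ "u @ [x]"]) (simp add: block_code_def x_def)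
    next
      case 3
      then show ?thesis using u by simp
    qed
  qed
qed

lemma regular_lang_block_code:
  assumes reg: "regular_lang Sig L" and code: "block_code e k Sig T" and "finite T"
  shows "regular_lang T (block_encode e ` L)"
proof -
  obtain Q :: "nat set" and q0 delta F where Q: "finite Q" "q0 \<in> Q"
    "\<forall>q\<in>Q. \<forall>x\<in>Sig. delta q x \<in> Q" "F \<subseteq> Q" and L: "L = {w \<in> lists Sig. foldl delta q0 w \<in> F}"
    using reg unfolding regular_lang_def by blast
  let ?step = "block_step e k Sig delta"
  define Q' where "Q' = insert None (Some ` (Q \<times> {r. set r \<subseteq> T \<and> length r \<le> k}))"
  have "finite Q'"
    unfolding Q'_def using Q(1) finite_lists_length_le[OF \<open>finite T\<close>] by auto
  moreover have "\<forall>st\<in>Q'. \<forall>s\<in>T. ?step st s \<in> Q'"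
    using Q(3) code by (auto simp: Q'_def block_code_def inv_into_into)
  moreover have "block_encode e ` L = {w \<in> lists T. foldl ?step (Some (q0, [])) w \<in> Some ` (F \<times> {[]})}"
  proof (intro equalityI subsetI)
    fix w assume "w \<in> block_encode e ` L"
    then obtain u where "u \<in> L" "u \<in> lists Sig" "w = block_encode e u" using L by blast
    then show "w \<in> {w \<in> lists T. foldl ?step (Some (q0, [])) w \<in> Some ` (F \<times> {[]})}"
      using block_encode_in_lists[OF code \<open>u \<in> lists Sig\<close>] L
      by (auto simp: foldl_block_step_block_encode[OF code \<open>u \<in> lists Sig\<close>])
  next
    fix w assume w: "w \<in> {w \<in> lists T. foldl ?step (Some (q0, [])) w \<in> Some ` (F \<times> {[]})}"
    then obtain u r where "u \<in> lists Sig" "w = block_encode e u @ r"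
      "foldl ?step (Some (q0, [])) w = Some (foldl delta q0 u, r)"
      using foldl_block_step_cases[OF code, of delta q0 w] by force
    then show "w \<in> block_encode e ` L" using w L by auto
  qed
  ultimately show ?thesis
    using Q code by (intro regular_langI[of Q' "Some (q0, [])"]) (auto simp: Q'_def block_code_def)
qed

section \<open>Convolutions of block-coded words\<close>

lemma conv_Nil_left: "conv [] v = map (\<lambda>y. (None, Some y)) v"
  unfolding conv_def by (rule nth_equalityI) auto

lemma conv_Nil_right: "conv u [] = map (\<lambda>x. (Some x, None)) u"
  unfolding conv_def by (rule nth_equalityI) auto

lemma conv_Cons: "conv (a # u) (b # v) = (Some a, Some b) # conv u v"
  unfolding conv_def by (simp add: map_upt_Suc del: upt_Suc)

lemma conv_append: "length p = length q \<Longrightarrow> conv (p @ u) (q @ v) = conv p q @ conv u v"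
  by (induction p q rule: list_induct2) (simp_all add: conv_Nil_left conv_Cons)

lemma conv_same_length: "length p = length q \<Longrightarrow> conv p q = zip (map Some p) (map Some q)"
  by (induction p q rule: list_induct2) (simp_all add: conv_Nil_left conv_Cons)

lemma conv_self: "conv w w = map (\<lambda>x. (Some x, Some x)) w"
  by (simp add: conv_same_length zip_map_map zip_same_conv_map)

lemma finite_conv_alph: "finite Sig \<Longrightarrow> finite (conv_alph Sig Sig)"
  by (simp add: conv_alph_def)

lemma zip_map_Some_replicate_None:
  "length ys = k \<Longrightarrow> zip (map Some ys) (replicate k None) = map (\<lambda>y. (Some y, None)) ys"
  by (induction ys arbitrary: k) auto

lemma zip_replicate_None_map_Some:
  "length ys = k \<Longrightarrow> zip (replicate k None) (map Some ys) = map (\<lambda>y. (None, Some y)) ys"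
  by (induction ys arbitrary: k) auto

definition pad_block :: "('a \<Rightarrow> 'b list) \<Rightarrow> nat \<Rightarrow> 'a option \<Rightarrow> 'b option list" where
  "pad_block e k x = (case x of Some a \<Rightarrow> map Some (e a) | None \<Rightarrow> replicate k None)"

definition conv_code ::
  "('a \<Rightarrow> 'b list) \<Rightarrow> nat \<Rightarrow> 'a option \<times> 'a option \<Rightarrow> ('b option \<times> 'b option) list" where
  "conv_code e k xy = zip (pad_block e k (fst xy)) (pad_block e k (snd xy))"

lemma conv_block_encode:
  assumes "\<forall>x\<in>set u \<union> set v. length (e x) = k"
  shows "conv (block_encode e u) (block_encode e v) = block_encode (conv_code e k) (conv u v)"
  using assms
proof (induction u v rule: list_induct2')
  case (2 a u)
  then show ?case
    by (auto simp: conv_Nil_right map_concat comp_def conv_code_def pad_block_def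
        zip_map_Some_replicate_None zip_replicate_None_map_Some intro!: arg_cong[where f=concat])
next
  case (3 b v)
  then show ?case
    by (auto simp: conv_Nil_left map_concat comp_def conv_code_def pad_block_def
        zip_map_Some_replicate_None zip_replicate_None_map_Some intro!: arg_cong[where f=concat])
next
  case (4 a u b v)
  then show ?case
    by (simp add: conv_append conv_Cons conv_same_length conv_code_def pad_block_def)
qed (simp add: conv_def)

lemma length_pad_block:
  "block_code e k Sig T \<Longrightarrow> x \<in> insert None (Some ` Sig) \<Longrightarrow> length (pad_block e k x) = k"
  by (auto simp: block_code_def pad_block_def)

lemma set_pad_block:
  "block_code e k Sig T \<Longrightarrow> x \<in> insert None (Some ` Sig) \<Longrightarrow>
     set (pad_block e k x) \<subseteq> insert None (Some ` T)"
  by (auto simp: block_code_def pad_block_def in_lists_conv_set)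

lemma pad_block_Some_nth:
  "block_code e k Sig T \<Longrightarrow> a \<in> Sig \<Longrightarrow> i < k \<Longrightarrow> pad_block e k (Some a) ! i \<noteq> None"
  by (simp add: block_code_def pad_block_def)

lemma inj_on_pad_block:
  assumes "block_code e k Sig T"
  shows "inj_on (pad_block e k) (insert None (Some ` Sig))"
proof (rule inj_onI)
  fix x y assume x: "x \<in> insert None (Some ` Sig)" and y: "y \<in> insert None (Some ` Sig)"
    and eq: "pad_block e k x = pad_block e k y"
  have "0 < k" using assms by (simp add: block_code_def)
  have Some_None: "pad_block e k (Some a) \<noteq> pad_block e k None" if "a \<in> Sig" for a
    using pad_block_Some_nth[OF assms that \<open>0 < k\<close>] \<open>0 < k\<close> by (auto simp: pad_block_def)
  from x y consider "x = None" "y = None" | a where "a \<in> Sig" "x = Some a" "y = None"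
    | b where "b \<in> Sig" "x = None" "y = Some b" | a b where "a \<in> Sig" "b \<in> Sig" "x = Some a" "y = Some b"
    by blast
  then show "x = y"
  proof cases
    case 2
    then show ?thesis using eq Some_None by simp
  next
    case 3
    then show ?thesis using eq Some_None by metis
  next
    case 4
    then show ?thesis using eq assms by (simp add: pad_block_def block_code_def inj_on_def)
  qed simp
qed

lemma inj_on_conv_code:
  assumes code: "block_code e k Sig T"
  shows "inj_on (conv_code e k) (conv_alph Sig Sig)"
proof (rule inj_onI)
  let ?S = "insert None (Some ` Sig)"
  fix xy zw assume xy: "xy \<in> conv_alph Sig Sig" and zw: "zw \<in> conv_alph Sig Sig"
    and eq: "conv_code e k xy = conv_code e k zw"
  have in_S: "fst xy \<in> ?S" "snd xy \<in> ?S" "fst zw \<in> ?S" "snd zw \<in> ?S"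
    using xy zw by (auto simp: conv_alph_def)
  then have "pad_block e k (fst xy) = pad_block e k (fst zw)"
    "pad_block e k (snd xy) = pad_block e k (snd zw)"
    using eq length_pad_block[OF code] unfolding conv_code_def by (metis zip_eq_conv)+
  then have "fst xy = fst zw" "snd xy = snd zw"
    using inj_onD[OF inj_on_pad_block[OF code]] in_S by blast+
  then show "xy = zw" by (rule prod_eqI)
qed

lemma conv_code_in_lists:
  assumes code: "block_code e k Sig T" and xy: "xy \<in> conv_alph Sig Sig"
  shows "conv_code e k xy \<in> lists (conv_alph T T)"
proof -
  let ?S = "insert None (Some ` Sig)"
  obtain x y where xy_eq: "xy = (x, y)" and in_S: "x \<in> ?S" "y \<in> ?S"
    and not_pad: "x \<noteq> None \<or> y \<noteq> None"
    using xy by (auto simp: conv_alph_def)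
  have lengths: "length (pad_block e k x) = k" "length (pad_block e k y) = k"
    using length_pad_block[OF code] in_S by blast+
  have sets: "set (pad_block e k x) \<subseteq> insert None (Some ` T)"
    "set (pad_block e k y) \<subseteq> insert None (Some ` T)"
    using set_pad_block[OF code] in_S by blast+
  have "(pad_block e k x ! i, pad_block e k y ! i) \<in> conv_alph T T" if "i < k" for i
  proof -
    have "pad_block e k x ! i \<in> insert None (Some ` T)" "pad_block e k y ! i \<in> insert None (Some ` T)"
      using sets lengths nth_mem \<open>i < k\<close> by (metis subsetD)+
    moreover have "pad_block e k x ! i \<noteq> None \<or> pad_block e k y ! i \<noteq> None"
      using not_pad in_S pad_block_Some_nth[OF code _ \<open>i < k\<close>] by blast
    ultimately show ?thesis by (auto simp: conv_alph_def)
  qed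
  then show ?thesis
    using lengths by (auto simp: xy_eq conv_code_def set_zip)
qed

lemma block_code_conv_code:
  assumes code: "block_code e k Sig T"
  shows "block_code (conv_code e k) k (conv_alph Sig Sig) (conv_alph T T)"
proof -
  have "length (conv_code e k xy) = k" if "xy \<in> conv_alph Sig Sig" for xy
    using that length_pad_block[OF code] by (auto simp: conv_code_def conv_alph_def)
  then show ?thesis
    using code inj_on_conv_code[OF code] conv_code_in_lists[OF code]
    by (simp add: block_code_def)
qed

section \<open>Transporting automatic representations along block codes\<close>

lemma FA_recognizable_block_code:
  assumes rec: "FA_recognizable Sig R" and code: "block_code e k Sig T" and "finite T"
  shows "FA_recognizable T ((\<lambda>(u, v). (block_encode e u, block_encode e v)) ` R)"
proof -
  have R: "R \<subseteq> lists Sig \<times> lists Sig"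
    and reg: "regular_lang (conv_alph Sig Sig) ((\<lambda>(u, v). conv u v) ` R)"
    using rec by (simp_all add: FA_recognizable_def)
  have len: "\<forall>x\<in>Sig. length (e x) = k" using code by (simp add: block_code_def)
  have "conv (block_encode e u) (block_encode e v) = block_encode (conv_code e k) (conv u v)"
    if "(u, v) \<in> R" for u v
    using that R len by (intro conv_block_encode) auto
  then have "(\<lambda>(u, v). conv u v) ` (\<lambda>(u, v). (block_encode e u, block_encode e v)) ` R
      = block_encode (conv_code e k) ` (\<lambda>(u, v). conv u v) ` R"
    unfolding image_image by (intro image_cong) auto
  moreover have "regular_lang (conv_alph T T) (block_encode (conv_code e k) ` (\<lambda>(u, v). conv u v) ` R)"
    using reg block_code_conv_code[OF code] finite_conv_alph[OF \<open>finite T\<close>]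
    by (rule regular_lang_block_code)
  moreover have "(\<lambda>(u, v). (block_encode e u, block_encode e v)) ` R \<subseteq> lists T \<times> lists T"
  proof
    fix p assume "p \<in> (\<lambda>(u, v). (block_encode e u, block_encode e v)) ` R"
    then obtain u v where "(u, v) \<in> R" "p = (block_encode e u, block_encode e v)" by auto
    then show "p \<in> lists T \<times> lists T" using R block_encode_in_lists[OF code] by blast
  qed
  ultimately show ?thesis by (simp add: FA_recognizable_def)
qed

lemma FA_recognizable_diag:
  assumes "finite Sig" "regular_lang Sig L"
  shows "FA_recognizable Sig ((\<lambda>w. (w, w)) ` L)"
proof -
  have code: "block_code (\<lambda>x. [(Some x, Some x)]) 1 Sig (conv_alph Sig Sig)"
    by (auto simp: block_code_def conv_alph_def inj_on_def)
  have "(\<lambda>(u, v). conv u v) ` (\<lambda>w. (w, w)) ` L = block_encode (\<lambda>x. [(Some x, Some x)]) ` L"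
    by (simp add: image_image conv_self)
  moreover have "L \<subseteq> lists Sig" using assms(2) by (simp add: regular_lang_def)
  ultimately show ?thesis
    using regular_lang_block_code[OF assms(2) code finite_conv_alph[OF assms(1)]]
    by (auto simp: FA_recognizable_def)
qed

lemma the_inv_into_comp_the_inv_into:
  assumes "bij_betw phi L B" "inj_on c L" "g \<in> B"
  shows "the_inv_into (c ` L) (phi \<circ> the_inv_into L c) g = c (the_inv_into L phi g)"
proof (rule the_inv_into_f_eq)
  show "inj_on (phi \<circ> the_inv_into L c) (c ` L)"
    using assms(1,2) by (auto intro!: inj_onI simp: bij_betw_def inj_on_def the_inv_into_f_f)
  have "the_inv_into L phi g \<in> L" "phi (the_inv_into L phi g) = g"
    using assms(1,3) by (auto simp: bij_betw_def the_inv_into_into f_the_inv_into_f)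
  then show "(phi \<circ> the_inv_into L c) (c (the_inv_into L phi g)) = g"
    "c (the_inv_into L phi g) \<in> c ` L"
    using assms(2) by (simp_all add: the_inv_into_f_f)
qed

lemma automatic_rep_insert_one:
  assumes "monoid G" and rep: "automatic_rep G A Sig L phi"
  shows "automatic_rep G (insert \<one>\<^bsub>G\<^esub> A) Sig L phi"
proof -
  have bij: "bij_betw phi L (carrier G)" using rep by (simp add: automatic_rep_def)
  have "{(the_inv_into L phi g, the_inv_into L phi (g \<otimes>\<^bsub>G\<^esub> \<one>\<^bsub>G\<^esub>)) | g. g \<in> carrier G}
      = (\<lambda>w. (w, w)) ` the_inv_into L phi ` carrier G"
    using monoid.r_one[OF assms(1)] by auto
  also have "\<dots> = (\<lambda>w. (w, w)) ` L"
    using bij_betw_the_inv_into[OF bij] by (simp add: bij_betw_def)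
  finally show ?thesis
    using rep FA_recognizable_diag by (auto simp: automatic_rep_def)
qed

lemma automatic_rep_block_code:
  assumes "monoid G" "A \<subseteq> carrier G" and rep: "automatic_rep G A Sig L phi"
    and code: "block_code e k Sig T" and "finite T"
  shows "automatic_rep G A T (block_encode e ` L) (phi \<circ> the_inv_into L (block_encode e))"
proof -
  have reg: "regular_lang Sig L" and bij: "bij_betw phi L (carrier G)"
    and rec: "\<forall>a\<in>A. FA_recognizable Sig
        {(the_inv_into L phi g, the_inv_into L phi (g \<otimes>\<^bsub>G\<^esub> a)) | g. g \<in> carrier G}"
    using rep by (simp_all add: automatic_rep_def)
  have inj: "inj_on (block_encode e) L"
    using inj_on_block_encode[OF code] reg by (auto simp: regular_lang_def intro: inj_on_subset)
  let ?psi = "phi \<circ> the_inv_into L (block_encode e)"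
  have bij': "bij_betw ?psi (block_encode e ` L) (carrier G)"
    using bij_betw_trans[OF bij_betw_the_inv_into[OF inj_on_imp_bij_betw[OF inj]] bij] .
  have inv: "the_inv_into (block_encode e ` L) ?psi g = block_encode e (the_inv_into L phi g)"
    if "g \<in> carrier G" for g
    using the_inv_into_comp_the_inv_into[OF bij inj that] .
  have "{(the_inv_into (block_encode e ` L) ?psi g, the_inv_into (block_encode e ` L) ?psi (g \<otimes>\<^bsub>G\<^esub> a))
        | g. g \<in> carrier G}
      = (\<lambda>(u, v). (block_encode e u, block_encode e v)) `
          {(the_inv_into L phi g, the_inv_into L phi (g \<otimes>\<^bsub>G\<^esub> a)) | g. g \<in> carrier G}"
    if "a \<in> A" for a
    unfolding Setcompr_eq_image image_image
    using that assms(2) monoid.m_closed[OF assms(1)] by (intro image_cong) (auto simp: inv)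
  then show ?thesis
    using FA_recognizable_block_code[OF _ code \<open>finite T\<close>] rec bij'
      regular_lang_block_code[OF reg code \<open>finite T\<close>] \<open>finite T\<close>
    by (simp add: automatic_rep_def)
qed

section \<open>Word metric\<close>

context group
begin

lemma gen_alph_subset_carrier: "A \<subseteq> carrier G \<Longrightarrow> gen_alph G A \<subseteq> carrier G"
  by (auto simp: gen_alph_def)

lemma inv_in_gen_alph: "A \<subseteq> carrier G \<Longrightarrow> x \<in> gen_alph G A \<Longrightarrow> inv x \<in> gen_alph G A"
  by (auto simp: gen_alph_def subsetD)

lemma word_eval_closed: "set w \<subseteq> carrier G \<Longrightarrow> word_eval G w \<in> carrier G"
  by (induction w) (auto simp: word_eval_def)

lemma word_eval_append:
  "set u \<subseteq> carrier G \<Longrightarrow> set v \<subseteq> carrier G \<Longrightarrow> word_eval G (u @ v) = word_eval G u \<otimes> word_eval G v"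
  by (induction u) (auto simp: word_eval_def m_assoc word_eval_closed[unfolded word_eval_def])

lemma word_eval_rev_map_inv:
  "set w \<subseteq> carrier G \<Longrightarrow> word_eval G (rev (map (m_inv G) w)) = inv (word_eval G w)"
proof (induction w)
  case (Cons a w)
  have "set (rev (map (m_inv G) w)) \<subseteq> carrier G" "set [inv a] \<subseteq> carrier G"
    using Cons.prems by auto
  then have "word_eval G (rev (map (m_inv G) (a # w)))
      = word_eval G (rev (map (m_inv G) w)) \<otimes> word_eval G [inv a]"
    by (simp add: word_eval_append)
  also have "\<dots> = inv (word_eval G w) \<otimes> inv a"
    using Cons by (simp add: word_eval_def)
  also have "\<dots> = inv (word_eval G (a # w))"
    using Cons.prems word_eval_closed[of w] by (simp add: word_eval_def inv_mult_group)
  finally show ?case .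
qed (simp add: word_eval_def)

lemma ex_word_eval:
  assumes "A \<subseteq> carrier G" "g \<in> generate G A"
  shows "\<exists>v \<in> lists (gen_alph G A). word_eval G v = g"
  using assms(2)
proof (induction rule: generate.induct)
  case one
  show ?case by (auto simp: word_eval_def intro!: bexI[of _ "[]"])
next
  case (incl h)
  then show ?case
    using assms(1) by (auto simp: word_eval_def gen_alph_def intro!: bexI[of _ "[h]"])
next
  case (inv h)
  then show ?case
    using assms(1) by (auto simp: word_eval_def gen_alph_def intro!: bexI[of _ "[inv h]"])
next
  case (eng h1 h2)
  then obtain v1 v2 where "v1 \<in> lists (gen_alph G A)" "v2 \<in> lists (gen_alph G A)"
    "word_eval G v1 = h1" "word_eval G v2 = h2" by blast
  then show ?case
    using gen_alph_subset_carrier[OF assms(1)] word_eval_append[of v1 v2]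
    by (intro bexI[of _ "v1 @ v2"]) auto
qed

lemma word_length_le:
  "v \<in> lists (gen_alph G A) \<Longrightarrow> word_eval G v = g \<Longrightarrow> word_length G A g \<le> length v"
  unfolding word_length_def by (rule Least_le) blast

lemma ex_word_of_word_length:
  assumes "A \<subseteq> carrier G" "g \<in> generate G A"
  shows "\<exists>v \<in> lists (gen_alph G A). length v = word_length G A g \<and> word_eval G v = g"
proof -
  have "\<exists>n. \<exists>v \<in> lists (gen_alph G A). length v = n \<and> word_eval G v = g"
    using ex_word_eval[OF assms] by blast
  then show ?thesis unfolding word_length_def by (rule LeastI_ex)
qed

lemma word_dist_word_eval_le:
  assumes "A \<subseteq> A'" "A' \<subseteq> carrier G" "w \<in> lists (gen_alph G A')" "g \<in> generate G A"
  shows "word_dist G A' (word_eval G w) g \<le> length w + word_length G A g"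
proof -
  have A: "A \<subseteq> carrier G" using assms(1,2) by blast
  have sub: "gen_alph G A \<subseteq> gen_alph G A'" using assms(1) by (auto simp: gen_alph_def)
  obtain v where v: "v \<in> lists (gen_alph G A)" "length v = word_length G A g" "word_eval G v = g"
    using ex_word_of_word_length[OF A assms(4)] by blast
  have path: "rev (map (m_inv G) w) @ v \<in> lists (gen_alph G A')"
    using assms(3) v(1) sub inv_in_gen_alph[OF assms(2)] by auto
  have "set (rev (map (m_inv G) w)) \<subseteq> carrier G" "set v \<subseteq> carrier G" "set w \<subseteq> carrier G"
    using assms(3) v(1) sub gen_alph_subset_carrier[OF assms(2)] by auto
  then have "word_eval G (rev (map (m_inv G) w) @ v) = inv (word_eval G w) \<otimes> g"
    using v(3) by (simp add: word_eval_append word_eval_rev_map_inv)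
  then have "word_dist G A' (word_eval G w) g \<le> length (rev (map (m_inv G) w) @ v)"
    unfolding word_dist_def using word_length_le[OF path] by simp
  then show ?thesis using v(2) by simp
qed

end

section \<open>Growth of the representation\<close>

lemma finite_image_words_length_le:
  "finite Sig \<Longrightarrow> L \<subseteq> lists Sig \<Longrightarrow> finite {g w | w. w \<in> L \<and> length w \<le> n}"
  by (rule finite_subset[of _ "g ` {w. set w \<subseteq> Sig \<and> length w \<le> n}"])
     (auto intro: finite_lists_length_le)

lemma h_cayley_le_h_phi:
  assumes "finite Sig" "L \<subseteq> lists Sig" "finite S" "L' \<subseteq> lists S"
    and "\<And>w. w \<in> L' \<Longrightarrow> \<exists>u\<in>L. length u \<le> length w \<and>
           word_dist G A' (word_eval G w) (psi w) \<le> length w + word_length G A (phi u)"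
  shows "h_cayley G A' L' psi n \<le> n + h_phi G A L phi n"
proof -
  define P where "P = {word_length G A (phi u) | u. u \<in> L \<and> length u \<le> n}"
  define D where "D = {word_dist G A' (word_eval G w) (psi w) | w. w \<in> L' \<and> length w \<le> n}"
  have "finite P" "finite D"
    unfolding P_def D_def using assms(1-4) by (simp_all add: finite_image_words_length_le)
  have "d \<le> n + Max (insert 0 P)" if "d \<in> D" for d
  proof -
    obtain w where w: "w \<in> L'" "length w \<le> n" "d = word_dist G A' (word_eval G w) (psi w)"
      using \<open>d \<in> D\<close> by (auto simp: D_def)
    then obtain u where "u \<in> L" "length u \<le> length w"
      "d \<le> length w + word_length G A (phi u)" using assms(5) by blast
    moreover have "word_length G A (phi u) \<le> Max (insert 0 P)"
      using calculation w(2) \<open>finite P\<close> by (intro Max_ge) (auto simp: P_def)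
    ultimately show ?thesis using w(2) by linarith
  qed
  then have "Max (insert 0 D) \<le> n + Max (insert 0 P)"
    using \<open>finite D\<close> by (intro Max.boundedI) auto
  then show ?thesis
    unfolding h_cayley_def h_phi_def D_def[symmetric] P_def[symmetric] by simp
qed

lemma (in group) h_cayley_block_code_le:
  assumes "fin_gen_set G A" "A \<subseteq> A'" "A' \<subseteq> carrier G" "finite A'"
    and code: "block_code e k Sig (gen_alph G A')" and "finite Sig" "L \<subseteq> lists Sig"
    and bij: "bij_betw phi L (carrier G)"
  shows "h_cayley G A' (block_encode e ` L) (phi \<circ> the_inv_into L (block_encode e)) n
           \<le> n + h_phi G A L phi n"
proof (rule h_cayley_le_h_phi)
  have inj: "inj_on (block_encode e) L"
    using inj_on_block_encode[OF code] assms(7) by (rule inj_on_subset)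
  have len: "\<forall>x\<in>Sig. length (e x) = k" "0 < k" using code by (auto simp: block_code_def)
  fix w assume "w \<in> block_encode e ` L"
  then obtain u where u: "u \<in> L" "w = block_encode e u" by blast
  have "length u \<le> length w"
    using u assms(7) len length_block_encode[of u e k] by auto
  moreover have "(phi \<circ> the_inv_into L (block_encode e)) w = phi u"
    using the_inv_into_f_f[OF inj u(1)] u(2) by simp
  moreover have "phi u \<in> generate G A"
    using u bij assms(1) by (auto simp: bij_betw_def fin_gen_set_def)
  moreover have "w \<in> lists (gen_alph G A')"
    using u assms(7) block_encode_in_lists[OF code] by blast
  ultimately show "\<exists>u\<in>L. length u \<le> length w \<and>
      word_dist G A' (word_eval G w) ((phi \<circ> the_inv_into L (block_encode e)) w)
        \<le> length w + word_length G A (phi u)"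
    using u(1) word_dist_word_eval_le[OF assms(2,3)] by auto
next
  show "finite (gen_alph G A')"
    using \<open>finite A'\<close> by (simp add: gen_alph_def)
  show "block_encode e ` L \<subseteq> lists (gen_alph G A')"
    using assms(7) block_encode_in_lists[OF code] by blast
qed (use assms in auto)

lemma preceq_plus_id:
  assumes "g \<preceq>\<^sub>F f" "\<And>n. h n \<le> real n + g n"
  shows "h \<preceq>\<^sub>F (\<lambda>n. f n + real n)"
proof -
  obtain N K M where KM: "0 < K" "0 < M" "\<forall>n\<ge>N. g n \<le> real K * f (M * n)"
    using assms(1) unfolding preceq_def by blast
  have "h n \<le> real K * (f (M * n) + real (M * n))" if "N \<le> n" for n
  proof -
    have "n \<le> K * M * n" using KM by simp
    then have "real n \<le> real K * real (M * n)" by (simp add: mult.assoc flip: of_nat_mult)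
    moreover have "g n \<le> real K * f (M * n)" using KM(3) that by blast
    ultimately show ?thesis using assms(2)[of n] by (simp add: distrib_left)
  qed
  then show ?thesis using KM(1,2) unfolding preceq_def by blast
qed

section \<open>Choosing the block code\<close>

lemma ex_block_code:
  assumes "finite Sig" "finite T" "2 \<le> card T"
  shows "\<exists>e k. block_code e k Sig T"
proof -
  let ?k = "card Sig + 1"
  have "card Sig < 2 ^ ?k" using less_exp[of ?k] by simp
  also have "\<dots> \<le> card T ^ ?k" using assms(3) by (rule power_mono) simp
  also have "\<dots> = card {w. set w \<subseteq> T \<and> length w = ?k}"
    using card_lists_length_eq[OF assms(2)] by simp
  finally obtain e where "e ` Sig \<subseteq> {w. set w \<subseteq> T \<and> length w = ?k}" "inj_on e Sig"
    using card_le_inj[OF assms(1) finite_lists_length_eq[OF assms(2)]] by (meson less_imp_le)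
  then have "block_code e ?k Sig T" by (auto simp: block_code_def)
  then show ?thesis by blast
qed

context group
begin

lemma fin_gen_set_insert_one:
  assumes "fin_gen_set G A"
  shows "fin_gen_set G (insert \<one> A)"
proof -
  have A: "finite A" "A \<subseteq> carrier G" "generate G A = carrier G"
    using assms by (simp_all add: fin_gen_set_def)
  then have "insert \<one> A \<subseteq> carrier G" by simp
  then have "generate G (insert \<one> A) = carrier G"
    using generate_in_carrier mono_generate[of A "insert \<one> A"] A(3) by blast
  then show ?thesis using A \<open>insert \<one> A \<subseteq> carrier G\<close> by (simp add: fin_gen_set_def)
qed

lemma two_le_card_gen_alph_insert_one:
  assumes "fin_gen_set G A" "carrier G \<noteq> {\<one>}"
  shows "2 \<le> card (gen_alph G (insert \<one> A))"
proof -
  have "\<not> A \<subseteq> {\<one>}"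
  proof
    assume "A \<subseteq> {\<one>}"
    then have "generate G A \<subseteq> {\<one>}" by (rule generate_subgroup_incl[OF _ triv_subgroup])
    then show False using assms by (auto simp: fin_gen_set_def)
  qed
  then obtain a where "a \<in> A" "a \<noteq> \<one>" by blast
  then have "{\<one>, a} \<subseteq> gen_alph G (insert \<one> A)" by (auto simp: gen_alph_def)
  moreover have "finite (gen_alph G (insert \<one> A))"
    using assms(1) by (simp add: fin_gen_set_def gen_alph_def)
  ultimately have "card {\<one>, a} \<le> card (gen_alph G (insert \<one> A))"
    by (rule card_mono[rotated])
  then show ?thesis using \<open>a \<noteq> \<one>\<close> by simp
qed

lemma in_B_trivial_group:
  assumes triv: "carrier G = {\<one>}" and f: "\<forall>n\<ge>N. 0 \<le> f n"
  shows "in_B G f"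
proof -
  define psi :: "'a list \<Rightarrow> 'a" where "psi = (\<lambda>_. \<one>)"
  have "gen_alph G {\<one>} = {\<one>}" by (simp add: gen_alph_def)
  have gen: "fin_gen_set G {\<one>}"
    using triv generate.one[of G "{\<one>}"] generate_in_carrier[of "{\<one>}"] by (auto simp: fin_gen_set_def)
  have "the_inv_into {[]} psi \<one> = []"
    by (rule the_inv_into_f_eq) (auto simp: psi_def)
  then have "{(the_inv_into {[]} psi g, the_inv_into {[]} psi (g \<otimes> \<one>)) | g. g \<in> carrier G}
      = (\<lambda>w. (w, w)) ` {[]}"
    using triv by auto
  then have rep: "automatic_rep G {\<one>} (gen_alph G {\<one>}) {[]} psi"
    using FA_recognizable_diag[of "{\<one>}" "{[]}"] triv \<open>gen_alph G {\<one>} = {\<one>}\<close>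
    by (simp add: automatic_rep_def regular_lang_Nil bij_betw_def psi_def)
  have "word_length G {\<one>} \<one> = 0"
    using word_length_le[of "[]" "{\<one>}" \<one>] by (simp add: word_eval_def)
  then have "h_cayley G {\<one>} {[]} psi n = 0" for n
    by (simp add: h_cayley_def word_dist_def word_eval_def psi_def)
  then have "h_cayley G {\<one>} {[]} psi \<preceq>\<^sub>F f"
    using f unfolding preceq_def by (intro exI[of _ N] exI[of _ 1]) auto
  then show ?thesis
    unfolding in_B_def using gen rep by (intro exI[of _ "{\<one>}"] exI[of _ "{[]}"]) auto
qed

end

theorem mainTheorem9:
  fixes G :: "('g, 'b) monoid_scheme" and A :: "'g set"
    and Sig :: "'s set" and L :: "'s list set" and phi :: "'s list \<Rightarrow> 'g"
    and f :: "nat \<Rightarrow> real" and Q :: nat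
  assumes "group G"
    and "fin_gen_set G A"
    and "automatic_rep G A Sig L phi"
    and "in_frakF f Q"
    and "h_phi G A L phi \<preceq>\<^sub>F f"
  shows "in_B G (\<lambda>n. f n + real n)"
proof -
  interpret group G by fact
  show ?thesis
  proof (cases "carrier G = {\<one>\<^bsub>G\<^esub>}")
    case True
    then show ?thesis using assms(4) by (intro in_B_trivial_group[of Q]) (auto simp: in_frakF_def)
  next
    case False
    let ?A = "insert \<one>\<^bsub>G\<^esub> A" and ?S = "gen_alph G (insert \<one>\<^bsub>G\<^esub> A)"
    have gen: "fin_gen_set G ?A" using fin_gen_set_insert_one[OF assms(2)] .
    have rep: "automatic_rep G ?A Sig L phi"
      using automatic_rep_insert_one[OF _ assms(3)] by simp
    then have Sig: "finite Sig" "L \<subseteq> lists Sig" "bij_betw phi L (carrier G)"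
      by (auto simp: automatic_rep_def regular_lang_def)
    obtain e k where code: "block_code e k Sig ?S"
      using ex_block_code[OF Sig(1) _ two_le_card_gen_alph_insert_one[OF assms(2) False]] gen
      by (auto simp: fin_gen_set_def gen_alph_def)
    let ?psi = "phi \<circ> the_inv_into L (block_encode e)"
    have "automatic_rep G ?A ?S (block_encode e ` L) ?psi"
      using automatic_rep_block_code[OF _ _ rep code] gen by (auto simp: fin_gen_set_def gen_alph_def)
    moreover have "h_cayley G ?A (block_encode e ` L) ?psi \<preceq>\<^sub>F (\<lambda>n. f n + real n)"
      by (intro preceq_plus_id[OF assms(5)] h_cayley_block_code_le[OF assms(2) _ _ _ code Sig])
        (use gen in \<open>auto simp: fin_gen_set_def\<close>)
    moreover have "block_encode e ` L \<subseteq> lists ?S"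
      using Sig(2) block_encode_in_lists[OF code] by blast
    ultimately show ?thesis
      unfolding in_B_def using gen by blast
  qed
qed

end
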